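(* Let $(V,\mu)$ be an infinite, connected, locally finite weighted graph, let $1<s<\infty$, and let $\sigma\in\ell^+(V)$ satisfy $G\sigma(x)<\infty$ for every $x\in V$. Then for all $x\in V$, $$[G\sigma(x)]^s\le s\,G\big[(G\sigma)^{s-1}\sigma\big](x).$$
   Context: Weighted graph: $\mu_{xy}=\mu_{yx}\ge0$, $\mu_{xy}>0$ iff $x\sim y$, $\mu(x)=\sum_{y\sim x}\mu_{xy}$. Random walk $P(x,y)=\mu_{xy}/\mu(x)$, $P_n(x,y)=\mathbb P_x[X_n=y]$, Green function $g(x,y)=\sum_{n\ge0}P_n(x,y)/\mu(y)\in(0,\infty]$, Green operator $Gf(x)=\sum_{y\in V}g(x,y)f(y)\mu(y)$. *)

theory Defs
  imports "HOL-Analysis.Analysis"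
begin

definition neighbors :: "('v \<Rightarrow> 'v \<Rightarrow> real) \<Rightarrow> 'v \<Rightarrow> 'v set" where
  "neighbors \<mu> x = {y. \<mu> x y > 0}"

definition weighted_graph :: "('v \<Rightarrow> 'v \<Rightarrow> real) \<Rightarrow> bool" where
  "weighted_graph \<mu> \<longleftrightarrow> (\<forall>x y. \<mu> x y = \<mu> y x \<and> \<mu> x y \<ge> 0)"

definition locally_finite :: "('v \<Rightarrow> 'v \<Rightarrow> real) \<Rightarrow> bool" where
  "locally_finite \<mu> \<longleftrightarrow> (\<forall>x. finite (neighbors \<mu> x))"

definition connected_graph :: "('v \<Rightarrow> 'v \<Rightarrow> real) \<Rightarrow> bool" where
  "connected_graph \<mu> \<longleftrightarrow> (\<forall>x y. (x, y) \<in> {(a, b). \<mu> a b > 0}\<^sup>*)"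

definition vweight :: "('v \<Rightarrow> 'v \<Rightarrow> real) \<Rightarrow> 'v \<Rightarrow> real" where
  "vweight \<mu> x = (\<Sum>y\<in>neighbors \<mu> x. \<mu> x y)"

definition trans_prob :: "('v \<Rightarrow> 'v \<Rightarrow> real) \<Rightarrow> 'v \<Rightarrow> 'v \<Rightarrow> real" where
  "trans_prob \<mu> x y = \<mu> x y / vweight \<mu> x"

text \<open>n-step transition probabilities P_n(x,y) = P_x[X_n = y]\<close>
fun nstep :: "('v \<Rightarrow> 'v \<Rightarrow> real) \<Rightarrow> nat \<Rightarrow> 'v \<Rightarrow> 'v \<Rightarrow> real" where
  "nstep \<mu> 0 x y = (if x = y then 1 else 0)"
| "nstep \<mu> (Suc n) x y = (\<Sum>z\<in>neighbors \<mu> x. trans_prob \<mu> x z * nstep \<mu> n z y)"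

definition green :: "('v \<Rightarrow> 'v \<Rightarrow> real) \<Rightarrow> 'v \<Rightarrow> 'v \<Rightarrow> ennreal" where
  "green \<mu> x y = (\<Sum>n. ennreal (nstep \<mu> n x y)) / ennreal (vweight \<mu> y)"

definition green_op :: "('v \<Rightarrow> 'v \<Rightarrow> real) \<Rightarrow> ('v \<Rightarrow> real) \<Rightarrow> 'v \<Rightarrow> ennreal" where
  "green_op \<mu> f x = (\<Sum>\<^sub>\<infinity>y\<in>UNIV. green \<mu> x y * ennreal (f y) * ennreal (vweight \<mu> y))"

end

theory Submission
  imports Defs
begin

text \<open>
  Write \<open>P\<close> for the transition operator of the random walk. Then
  \<open>G\<sigma> = \<Sum>\<^sub>k P\<^sup>k\<sigma>\<close>, and its partial sums satisfy \<open>v\<^sub>n\<^sub>+\<^sub>1 = \<sigma> + P v\<^sub>n\<close>.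
  Convexity of \<open>t \<mapsto> t\<^sup>s\<close> gives
  \<open>v\<^sub>n\<^sub>+\<^sub>1\<^sup>s \<le> (P v\<^sub>n)\<^sup>s + s (G\<sigma>)\<^sup>s\<^sup>-\<^sup>1 \<sigma>\<close>, and Jensen's inequality for the
  probability kernel \<open>P\<close> gives \<open>(P v\<^sub>n)\<^sup>s \<le> P (v\<^sub>n\<^sup>s)\<close>. By induction
  \<open>v\<^sub>n\<^sup>s \<le> s \<Sum>\<^sub>k\<^sub><\<^sub>n P\<^sup>k ((G\<sigma>)\<^sup>s\<^sup>-\<^sup>1 \<sigma>)\<close>, and \<open>n \<rightarrow> \<infinity>\<close> yields the claim.
\<close>

lemma powr_tangent_le:
  fixes c x s :: real
  assumes "0 < c" "0 \<le> x" "1 \<le> s"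
  shows "c powr s + s * c powr (s - 1) * (x - c) \<le> x powr s"
proof (cases "x = 0")
  case True
  have "c powr (s - 1) * c = c powr s"
    using assms by (simp add: powr_diff)
  then show ?thesis
    using True assms by (simp add: algebra_simps)
next
  case False
  have "((\<lambda>z. z powr s) has_field_derivative s * c powr (s - 1)) (at c within {0<..})"
    by (rule has_field_derivative_at_within, rule has_real_derivative_powr) (use assms in auto)
  then have "s * c powr (s - 1) * (x - c) \<le> x powr s - c powr s"
    by (rule convex_on_imp_above_tangent[OF powr_convex[OF assms(3)], rotated -1])
       (use assms False in \<open>auto simp: convex_connected interior_open\<close>)
  then show ?thesis
    by simp
qed

lemma powr_add_le:
  fixes b t c s :: real
  assumes "0 \<le> b" "0 \<le> t" "b + t \<le> c" "1 \<le> s"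
  shows "(b + t) powr s \<le> b powr s + s * c powr (s - 1) * t"
proof (cases "b + t = 0")
  case True
  then show ?thesis
    using assms by simp
next
  case False
  then have pos: "0 < b + t"
    using assms by linarith
  have "(b + t) powr s + s * (b + t) powr (s - 1) * (b - (b + t)) \<le> b powr s"
    by (rule powr_tangent_le) (use assms pos in auto)
  moreover have "s * (b + t) powr (s - 1) * t \<le> s * c powr (s - 1) * t"
    using assms pos by (intro mult_right_mono mult_left_mono powr_mono2) auto
  ultimately show ?thesis
    by (simp add: algebra_simps)
qed

lemma powr_weighted_mean_le:
  fixes p y :: "'a \<Rightarrow> real"
  assumes "finite A" "(\<Sum>z\<in>A. p z) = 1"
    and "\<And>z. z \<in> A \<Longrightarrow> 0 \<le> p z" "\<And>z. z \<in> A \<Longrightarrow> 0 \<le> y z" "1 \<le> s"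
  shows "(\<Sum>z\<in>A. p z * y z) powr s \<le> (\<Sum>z\<in>A. p z * y z powr s)"
proof -
  define m where "m = (\<Sum>z\<in>A. p z * y z)"
  have "0 \<le> m"
    unfolding m_def using assms by (auto intro!: sum_nonneg)
  show ?thesis
  proof (cases "m = 0")
    case True
    then show ?thesis
      using assms unfolding m_def by (auto intro!: sum_nonneg)
  next
    case False
    with \<open>0 \<le> m\<close> have "0 < m" by simp
    \<comment> \<open>average the tangent line at the mean \<open>m\<close>\<close>
    have "(\<Sum>z\<in>A. p z * (m powr s + s * m powr (s - 1) * (y z - m)))
        = m powr s * (\<Sum>z\<in>A. p z) + s * m powr (s - 1) * ((\<Sum>z\<in>A. p z * y z) - m * (\<Sum>z\<in>A. p z))"
      by (simp add: algebra_simps sum.distrib sum_subtractf sum_distrib_left sum_distrib_right)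
    also have "\<dots> = m powr s"
      using assms(2) by (simp add: m_def)
    finally have "m powr s = (\<Sum>z\<in>A. p z * (m powr s + s * m powr (s - 1) * (y z - m)))" ..
    also have "\<dots> \<le> (\<Sum>z\<in>A. p z * y z powr s)"
      by (intro sum_mono mult_left_mono powr_tangent_le) (use assms \<open>0 < m\<close> in auto)
    finally show ?thesis
      unfolding m_def .
  qed
qed

text \<open>The library's \<open>summable_on_ennreal\<close> only covers functions coerced from \<open>enat\<close>.\<close>
lemma ennreal_summable_on [simp]: "(f :: 'a \<Rightarrow> ennreal) summable_on A"
  by (simp add: nonneg_summable_on_complete)

lemma infsum_cmult_right_ennreal:
  fixes g :: "'a \<Rightarrow> ennreal"
  shows "(\<Sum>\<^sub>\<infinity>y\<in>A. c * g y) = c * (\<Sum>\<^sub>\<infinity>y\<in>A. g y)"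
proof -
  have "(\<Sum>\<^sub>\<infinity>y\<in>A. c * g y) = (SUP F\<in>{F. finite F \<and> F \<subseteq> A}. \<Sum>y\<in>F. c * g y)"
    by (rule nonneg_infsum_complete) auto
  also have "\<dots> = c * (SUP F\<in>{F. finite F \<and> F \<subseteq> A}. \<Sum>y\<in>F. g y)"
    by (simp add: SUP_mult_left_ennreal sum_distrib_left)
  also have "(SUP F\<in>{F. finite F \<and> F \<subseteq> A}. \<Sum>y\<in>F. g y) = (\<Sum>\<^sub>\<infinity>y\<in>A. g y)"
    by (rule nonneg_infsum_complete[symmetric]) auto
  finally show ?thesis .
qed

lemma infsum_sum_ennreal:
  fixes g :: "'b \<Rightarrow> 'a \<Rightarrow> ennreal"
  assumes "finite A"
  shows "(\<Sum>\<^sub>\<infinity>y\<in>B. \<Sum>z\<in>A. g z y) = (\<Sum>z\<in>A. \<Sum>\<^sub>\<infinity>y\<in>B. g z y)"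
  using assms by (induction A rule: finite_induct) (simp_all add: infsum_add)

lemma sum_le_infsum_ennreal:
  fixes f :: "'a \<Rightarrow> ennreal"
  assumes "finite F" "F \<subseteq> A"
  shows "sum f F \<le> (\<Sum>\<^sub>\<infinity>y\<in>A. f y)"
  using assms by (subst nonneg_infsum_complete) (auto intro: SUP_upper)

lemma infsum_suminf_ennreal:
  fixes g :: "nat \<Rightarrow> 'a \<Rightarrow> ennreal"
  shows "(\<Sum>\<^sub>\<infinity>y\<in>A. \<Sum>n. g n y) = (\<Sum>n. \<Sum>\<^sub>\<infinity>y\<in>A. g n y)"
proof (rule antisym)
  have "(\<Sum>y\<in>F. \<Sum>n. g n y) \<le> (\<Sum>n. \<Sum>\<^sub>\<infinity>y\<in>A. g n y)" if "finite F" "F \<subseteq> A" for F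
  proof -
    have "(\<Sum>y\<in>F. \<Sum>n. g n y) = (\<Sum>n. \<Sum>y\<in>F. g n y)"
      by (rule suminf_sum[symmetric]) auto
    also have "\<dots> \<le> (\<Sum>n. \<Sum>\<^sub>\<infinity>y\<in>A. g n y)"
      by (intro suminf_le sum_le_infsum_ennreal that) auto
    finally show ?thesis .
  qed
  then show "(\<Sum>\<^sub>\<infinity>y\<in>A. \<Sum>n. g n y) \<le> (\<Sum>n. \<Sum>\<^sub>\<infinity>y\<in>A. g n y)"
    by (subst nonneg_infsum_complete) (auto intro: SUP_least)
  show "(\<Sum>n. \<Sum>\<^sub>\<infinity>y\<in>A. g n y) \<le> (\<Sum>\<^sub>\<infinity>y\<in>A. \<Sum>n. g n y)"
  proof (rule suminf_le_const)
    fix N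
    have "(\<Sum>n<N. \<Sum>\<^sub>\<infinity>y\<in>A. g n y) = (\<Sum>\<^sub>\<infinity>y\<in>A. \<Sum>n<N. g n y)"
      by (rule infsum_sum_ennreal[symmetric]) simp
    also have "\<dots> \<le> (\<Sum>\<^sub>\<infinity>y\<in>A. \<Sum>n. g n y)"
      by (intro infsum_mono sum_le_suminf) auto
    finally show "(\<Sum>n<N. \<Sum>\<^sub>\<infinity>y\<in>A. g n y) \<le> (\<Sum>\<^sub>\<infinity>y\<in>A. \<Sum>n. g n y)" .
  qed auto
qed

lemma vweight_nonneg: "0 \<le> vweight \<mu> x"
  unfolding vweight_def neighbors_def by (intro sum_nonneg) auto

lemma trans_prob_nonneg: "z \<in> neighbors \<mu> x \<Longrightarrow> 0 \<le> trans_prob \<mu> x z"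
  unfolding trans_prob_def neighbors_def using vweight_nonneg[of \<mu> x] by simp

lemma nstep_nonneg: "0 \<le> nstep \<mu> n x y"
  by (induction n arbitrary: x) (auto intro!: sum_nonneg mult_nonneg_nonneg trans_prob_nonneg)

lemma vweight_pos_if_connected:
  assumes "connected_graph \<mu>" "locally_finite \<mu>" "y \<noteq> x"
  shows "0 < vweight \<mu> x"
proof -
  have "(x, y) \<in> {(a, b). 0 < \<mu> a b}\<^sup>*"
    using assms(1) by (simp add: connected_graph_def)
  then obtain z where "0 < \<mu> x z"
    using assms(3) by (cases rule: converse_rtranclE) auto
  then have "z \<in> neighbors \<mu> x"
    by (simp add: neighbors_def)
  then show ?thesis
    unfolding vweight_def using assms(2)
    by (intro sum_pos) (auto simp: locally_finite_def neighbors_def)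
qed

definition trans_op :: "('v \<Rightarrow> 'v \<Rightarrow> real) \<Rightarrow> ('v \<Rightarrow> real) \<Rightarrow> 'v \<Rightarrow> real" where
  "trans_op \<mu> f x = (\<Sum>z\<in>neighbors \<mu> x. trans_prob \<mu> x z * f z)"

lemma trans_op_nonneg: "(\<And>z. 0 \<le> f z) \<Longrightarrow> 0 \<le> trans_op \<mu> f x"
  unfolding trans_op_def by (intro sum_nonneg mult_nonneg_nonneg trans_prob_nonneg) auto

lemma funpow_trans_op_nonneg: "(\<And>z. 0 \<le> f z) \<Longrightarrow> 0 \<le> (trans_op \<mu> ^^ k) f x"
  by (induction k arbitrary: x) (auto intro: trans_op_nonneg)

lemma trans_op_mono: "(\<And>z. f z \<le> g z) \<Longrightarrow> trans_op \<mu> f x \<le> trans_op \<mu> g x"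
  unfolding trans_op_def by (intro sum_mono mult_left_mono trans_prob_nonneg) auto

lemma trans_op_sum: "trans_op \<mu> (\<lambda>z. \<Sum>k\<in>A. f k z) x = (\<Sum>k\<in>A. trans_op \<mu> (f k) x)"
  unfolding trans_op_def by (simp add: sum_distrib_left) (rule sum.swap)

lemma funpow_trans_op_cmult:
  "(trans_op \<mu> ^^ k) (\<lambda>z. c * f z) = (\<lambda>z. c * (trans_op \<mu> ^^ k) f z)"
  by (induction k) (auto simp: trans_op_def sum_distrib_left mult_ac)

locale random_walk =
  fixes \<mu> :: "'v \<Rightarrow> 'v \<Rightarrow> real"
  assumes finite_neighbors: "finite (neighbors \<mu> x)"
    and vweight_pos: "0 < vweight \<mu> x"
begin

lemma sum_trans_prob: "(\<Sum>z\<in>neighbors \<mu> x. trans_prob \<mu> x z) = 1"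
  using vweight_pos[of x] unfolding trans_prob_def vweight_def
  by (simp add: sum_divide_distrib[symmetric])

lemma trans_op_powr_le:
  assumes "\<And>z. 0 \<le> f z" "1 \<le> s"
  shows "trans_op \<mu> f x powr s \<le> trans_op \<mu> (\<lambda>z. f z powr s) x"
  unfolding trans_op_def
  by (rule powr_weighted_mean_le)
     (use assms finite_neighbors sum_trans_prob trans_prob_nonneg in auto)

lemma infsum_nstep:
  assumes f: "\<And>y. 0 \<le> f y"
  shows "(\<Sum>\<^sub>\<infinity>y\<in>UNIV. ennreal (nstep \<mu> n x y * f y)) = ennreal ((trans_op \<mu> ^^ n) f x)"
proof (induction n arbitrary: x)
  case 0
  have "(\<Sum>\<^sub>\<infinity>y\<in>UNIV. ennreal (nstep \<mu> 0 x y * f y)) = (\<Sum>\<^sub>\<infinity>y\<in>{x}. ennreal (nstep \<mu> 0 x y * f y))"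
    by (rule infsum_cong_neutral) auto
  then show ?case
    by simp
next
  case (Suc n)
  let ?N = "neighbors \<mu> x" and ?p = "\<lambda>z. ennreal (trans_prob \<mu> x z)"
  have nonneg: "0 \<le> nstep \<mu> n z y * f y" "0 \<le> (trans_op \<mu> ^^ n) f z" for z y
    using f by (simp_all add: nstep_nonneg funpow_trans_op_nonneg)
  have "ennreal (nstep \<mu> (Suc n) x y * f y) = (\<Sum>z\<in>?N. ?p z * ennreal (nstep \<mu> n z y * f y))" for y
  proof -
    have "nstep \<mu> (Suc n) x y * f y = (\<Sum>z\<in>?N. trans_prob \<mu> x z * (nstep \<mu> n z y * f y))"
      by (simp add: sum_distrib_right mult.assoc)
    also have "ennreal \<dots> = (\<Sum>z\<in>?N. ennreal (trans_prob \<mu> x z * (nstep \<mu> n z y * f y)))"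
      by (intro sum_ennreal[symmetric] mult_nonneg_nonneg trans_prob_nonneg nstep_nonneg f)
    also have "\<dots> = (\<Sum>z\<in>?N. ?p z * ennreal (nstep \<mu> n z y * f y))"
      using nonneg trans_prob_nonneg by (intro sum.cong refl ennreal_mult) auto
    finally show ?thesis .
  qed
  then have "(\<Sum>\<^sub>\<infinity>y\<in>UNIV. ennreal (nstep \<mu> (Suc n) x y * f y))
      = (\<Sum>z\<in>?N. ?p z * (\<Sum>\<^sub>\<infinity>y\<in>UNIV. ennreal (nstep \<mu> n z y * f y)))"
    by (simp add: infsum_sum_ennreal[OF finite_neighbors] infsum_cmult_right_ennreal)
  also have "\<dots> = (\<Sum>z\<in>?N. ennreal (trans_prob \<mu> x z * (trans_op \<mu> ^^ n) f z))"
    using nonneg by (intro sum.cong refl) (simp add: Suc ennreal_mult trans_prob_nonneg)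
  also have "\<dots> = ennreal ((trans_op \<mu> ^^ Suc n) f x)"
    using nonneg by (simp add: trans_op_def sum_ennreal trans_prob_nonneg)
  finally show ?case .
qed

lemma green_op_eq_suminf:
  assumes f: "\<And>y. 0 \<le> f y"
  shows "green_op \<mu> f x = (\<Sum>n. ennreal ((trans_op \<mu> ^^ n) f x))"
proof -
  have "green \<mu> x y * ennreal (f y) * ennreal (vweight \<mu> y) = (\<Sum>n. ennreal (nstep \<mu> n x y * f y))"
    for y
  proof -
    let ?w = "ennreal (vweight \<mu> y)"
    have "?w \<noteq> 0" "?w \<noteq> \<infinity>"
      using vweight_pos[of y] by auto
    then have "green \<mu> x y * ?w = (\<Sum>n. ennreal (nstep \<mu> n x y))"
      unfolding green_def by (simp add: ennreal_divide_times ennreal_times_divide)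
    then show ?thesis
      using f by (simp add: mult.commute mult.left_commute ennreal_mult nstep_nonneg)
  qed
  then have "green_op \<mu> f x = (\<Sum>\<^sub>\<infinity>y\<in>UNIV. \<Sum>n. ennreal (nstep \<mu> n x y * f y))"
    unfolding green_op_def by simp
  also have "\<dots> = (\<Sum>n. ennreal ((trans_op \<mu> ^^ n) f x))"
    by (simp add: infsum_suminf_ennreal infsum_nstep[OF f])
  finally show ?thesis .
qed

lemma partial_green_powr_le:
  assumes s: "1 \<le> s" and \<sigma>: "\<And>y. 0 \<le> \<sigma> y"
    and partial_le: "\<And>n y. (\<Sum>k<n. (trans_op \<mu> ^^ k) \<sigma> y) \<le> G y"
  shows "(\<Sum>k<n. (trans_op \<mu> ^^ k) \<sigma> x) powr s
    \<le> (\<Sum>k<n. (trans_op \<mu> ^^ k) (\<lambda>y. s * G y powr (s - 1) * \<sigma> y) x)"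
proof (induction n arbitrary: x)
  case 0
  then show ?case by simp
next
  case (Suc n)
  define v where "v = (\<lambda>y. \<Sum>k<n. (trans_op \<mu> ^^ k) \<sigma> y)"
  define h where "h = (\<lambda>y. s * G y powr (s - 1) * \<sigma> y)"
  have v_nonneg: "0 \<le> v y" for y
    unfolding v_def using \<sigma> by (intro sum_nonneg funpow_trans_op_nonneg)
  have v_Suc: "(\<Sum>k<Suc n. (trans_op \<mu> ^^ k) \<sigma> x) = trans_op \<mu> v x + \<sigma> x"
    unfolding v_def by (simp add: sum.lessThan_Suc_shift trans_op_sum del: sum.lessThan_Suc)
  have "(trans_op \<mu> v x + \<sigma> x) powr s \<le> trans_op \<mu> v x powr s + h x"
    unfolding h_def
    using powr_add_le[OF trans_op_nonneg[OF v_nonneg] \<sigma> _ s] partial_le[of x "Suc n"] v_Suc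
    by (simp add: mult_ac)
  also have "trans_op \<mu> v x powr s \<le> trans_op \<mu> (\<lambda>y. v y powr s) x"
    by (rule trans_op_powr_le[OF v_nonneg s])
  also have "\<dots> \<le> trans_op \<mu> (\<lambda>y. \<Sum>k<n. (trans_op \<mu> ^^ k) h y) x"
    using Suc.IH unfolding v_def h_def by (intro trans_op_mono)
  also have "\<dots> + h x = (\<Sum>k<Suc n. (trans_op \<mu> ^^ k) h x)"
    by (simp add: sum.lessThan_Suc_shift trans_op_sum del: sum.lessThan_Suc)
  finally show ?case
    unfolding v_Suc h_def by simp
qed

lemma sums_green_op:
  assumes \<sigma>: "\<And>y. 0 \<le> \<sigma> y" and "green_op \<mu> \<sigma> x < \<infinity>"
  shows "(\<lambda>k. (trans_op \<mu> ^^ k) \<sigma> x) sums enn2real (green_op \<mu> \<sigma> x)"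
proof -
  have nonneg: "0 \<le> (trans_op \<mu> ^^ k) \<sigma> x" for k
    using \<sigma> by (rule funpow_trans_op_nonneg)
  have "summable (\<lambda>k. (trans_op \<mu> ^^ k) \<sigma> x)"
    using assms(2) nonneg by (intro summable_suminf_not_top) (simp_all add: green_op_eq_suminf[OF \<sigma>])
  with nonneg show ?thesis
    by (simp add: green_op_eq_suminf[OF \<sigma>] suminf_ennreal2 suminf_nonneg summable_sums)
qed

theorem green_op_powr_le:
  assumes s: "1 \<le> s" and \<sigma>: "\<And>y. 0 \<le> \<sigma> y" and finite: "\<And>y. green_op \<mu> \<sigma> y < \<infinity>"
  shows "ennreal (enn2real (green_op \<mu> \<sigma> x) powr s)
    \<le> ennreal s * green_op \<mu> (\<lambda>y. enn2real (green_op \<mu> \<sigma> y) powr (s - 1) * \<sigma> y) x"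
proof -
  define G where "G = (\<lambda>y. enn2real (green_op \<mu> \<sigma> y))"
  define g where "g = (\<lambda>y. G y powr (s - 1) * \<sigma> y)"
  define v where "v = (\<lambda>n y. \<Sum>k<n. (trans_op \<mu> ^^ k) \<sigma> y)"
  have sums: "(\<lambda>k. (trans_op \<mu> ^^ k) \<sigma> y) sums G y" for y
    unfolding G_def using \<sigma> finite by (rule sums_green_op)
  have v_nonneg: "0 \<le> v n y" for n y
    unfolding v_def using \<sigma> by (intro sum_nonneg funpow_trans_op_nonneg)
  have g_nonneg: "0 \<le> g y" for y
    unfolding g_def using \<sigma> by simp
  have "v n y \<le> G y" for n y
    unfolding v_def using sums_unique[OF sums] sums_summable[OF sums] \<sigma>
    by (metis funpow_trans_op_nonneg sum_le_suminf finite_lessThan)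
  then have "v n x powr s \<le> (\<Sum>k<n. (trans_op \<mu> ^^ k) (\<lambda>y. s * G y powr (s - 1) * \<sigma> y) x)" for n
    unfolding v_def by (rule partial_green_powr_le[OF s \<sigma>])
  also have "\<dots> n = s * (\<Sum>k<n. (trans_op \<mu> ^^ k) g x)" for n
    by (simp add: g_def mult.assoc funpow_trans_op_cmult sum_distrib_left)
  finally have "ennreal (v n x powr s) \<le> ennreal (s * (\<Sum>k<n. (trans_op \<mu> ^^ k) g x))" for n
    by (rule ennreal_leI)
  also have "\<dots> n = ennreal s * (\<Sum>k<n. ennreal ((trans_op \<mu> ^^ k) g x))" for n
    using s g_nonneg by (simp add: ennreal_mult sum_ennreal funpow_trans_op_nonneg sum_nonneg)
  also have "\<dots> n \<le> ennreal s * green_op \<mu> g x" for n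
    unfolding green_op_eq_suminf[OF g_nonneg] by (intro mult_left_mono sum_le_suminf) auto
  finally have bound: "ennreal (v n x powr s) \<le> ennreal s * green_op \<mu> g x" for n .
  have "(\<lambda>n. v n x) \<longlonglongrightarrow> G x"
    using sums[of x] unfolding v_def sums_def .
  then have "(\<lambda>n. ennreal (v n x powr s)) \<longlonglongrightarrow> ennreal (G x powr s)"
    using s v_nonneg by (intro tendsto_ennrealI tendsto_powr') auto
  then have "ennreal (G x powr s) \<le> ennreal s * green_op \<mu> g x"
    by (rule LIMSEQ_le_const2) (use bound in auto)
  then show ?thesis
    unfolding g_def G_def .
qed

end

theorem lemma4p1:
  fixes \<mu> :: "'v \<Rightarrow> 'v \<Rightarrow> real" and s :: real and \<sigma> :: "'v \<Rightarrow> real"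
  assumes "weighted_graph \<mu>" and "infinite (UNIV :: 'v set)"
    and "connected_graph \<mu>" and "locally_finite \<mu>"
    and "1 < s"
    and "\<forall>x. \<sigma> x \<ge> 0"
    and "\<forall>x. green_op \<mu> \<sigma> x < \<infinity>"
  shows "\<forall>x. ennreal (enn2real (green_op \<mu> \<sigma> x) powr s)
           \<le> ennreal s * green_op \<mu> (\<lambda>y. enn2real (green_op \<mu> \<sigma> y) powr (s - 1) * \<sigma> y) x"
proof -
  have "0 < vweight \<mu> x" for x
  proof -
    obtain y :: 'v where "y \<noteq> x"
      using assms(2) by (metis finite.emptyI finite_insert UNIV_eq_I insertCI)
    with assms(3,4) show ?thesis
      by (rule vweight_pos_if_connected)
  qed
  then interpret random_walk \<mu>
    using assms(4) by unfold_locales (simp_all add: locally_finite_def)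
  show ?thesis
    using assms(5-7) by (auto intro!: green_op_powr_le)
qed

end
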